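(* In the setting of the context, let $z\in Z$ and suppose there exists $Y^0(z)\subset Y$ whose closure has nonempty interior and such that any two points $y',y''\in Y^0(z)$ can be connected by an admissible trajectory of the associated system (there are $S>0$ and an admissible pair $(u(\cdot),y(\cdot))$ on $[0,S]$ with $y(0)=y'$, $y(S)=y''$). Then there exists $\omega\in\mathbb R^M$ such that $\eta(y)=\sum_{i=1}^M\omega_i\phi_i(y)$ satisfies $$\sigma^*_{N,M}(z)\le G(u,y,z)+\nabla\zeta^{N,M}(z)^Tg(u,y,z)+\nabla\eta(y)^Tf(u,y,z)\quad\forall(u,y)\in U\times Y,$$ i.e. a solution of the $(N,M)$-approximating associated dual problem exists.
   Context: $U$ compact metric space, $Y\subset\mathbb R^m$, $Z\subset\mathbb R^n$ compact, $f,g$ continuous from $U\times\mathbb R^m\times\mathbb R^n$ to $\mathbb R^m,\mathbb R^n$, Lipschitz in $(y,z)$, $G$ continuous real valued. $\phi_i\in C^1(\mathbb R^m)$ ($i\ge1$) is a fixed sequence; standing assumption: for each $M$ the gradients $\nabla\phi_1,\dots,\nabla\phi_M$ are linearly independent on every nonempty open subset of $\mathbb R^m$. The associated system is $y'(\tau)=f(u(\tau),y(\tau),z)$ with $z$ fixed; a pair $(u,y)$ ($u$ measurable, $y$ absolutely continuous) is admissible if the equation holds a.e. and $u(\tau)\in U$, $y(\tau)\in Y$. Fix $N,M$ and a function $\zeta^{N,M}\in C^1(\mathbb R^n)$ (in the paper, a solution of the $(N,M)$-approximating averaged dual problem). With $\mathcal V_M=\{\sum_{i=1}^M\omega_i\phi_i:\omega\in\mathbb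 R^M\}$, $\sigma^*_{N,M}(z)=\sup_{\eta\in\mathcal V_M}\{\theta:\theta\le G(u,y,z)+\nabla\zeta^{N,M}(z)^Tg(u,y,z)+\nabla\eta(y)^Tf(u,y,z)\ \forall(u,y)\in U\times Y\}$. *)

theory Defs
  imports "HOL-Analysis.Analysis"
begin

definition abs_cont_on :: "real \<Rightarrow> real \<Rightarrow> (real \<Rightarrow> 'a::real_normed_vector) \<Rightarrow> bool" where
  "abs_cont_on a b y \<longleftrightarrow>
     (\<forall>\<epsilon>>0. \<exists>\<delta>>0. \<forall>(n::nat) (l::nat \<Rightarrow> real) (r::nat \<Rightarrow> real).
        (\<forall>k<n. a \<le> l k \<and> l k \<le> r k \<and> r k \<le> b) \<and>
        (\<forall>k<n. \<forall>j<n. k \<noteq> j \<longrightarrow> r k \<le> l j \<or> r j \<le> l k) \<and>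
        (\<Sum>k<n. r k - l k) < \<delta>
        \<longrightarrow> (\<Sum>k<n. norm (y (r k) - y (l k))) < \<epsilon>)"

definition admissible_pair ::
  "'u::topological_space set \<Rightarrow> 'a::euclidean_space set \<Rightarrow> ('u \<Rightarrow> 'a \<Rightarrow> 'b \<Rightarrow> 'a) \<Rightarrow> 'b
     \<Rightarrow> real \<Rightarrow> (real \<Rightarrow> 'u) \<Rightarrow> (real \<Rightarrow> 'a) \<Rightarrow> bool" where
  "admissible_pair U Y f z S u y \<longleftrightarrow>
     u \<in> borel_measurable (restrict_space lebesgue {0..S}) \<and>
     abs_cont_on 0 S y \<and>
     (AE t in lebesgue. t \<in> {0..S} \<longrightarrow> (y has_vector_derivative f (u t) (y t) z) (at t)) \<and>
     (\<forall>t\<in>{0..S}. u t \<in> U \<and> y t \<in> Y)"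

text \<open>The gradient of eta = sum omega_i phi_i is
  sum omega_i grad phi_i; gphi i is the gradient of phi i, gzeta that of zeta.\<close>
definition sigma_star ::
  "'u set \<Rightarrow> 'a::euclidean_space set \<Rightarrow> ('u \<Rightarrow> 'a \<Rightarrow> 'b::euclidean_space \<Rightarrow> 'a)
   \<Rightarrow> ('u \<Rightarrow> 'a \<Rightarrow> 'b \<Rightarrow> 'b) \<Rightarrow> ('u \<Rightarrow> 'a \<Rightarrow> 'b \<Rightarrow> real) \<Rightarrow> (nat \<Rightarrow> 'a \<Rightarrow> 'a)
   \<Rightarrow> ('b \<Rightarrow> 'b) \<Rightarrow> nat \<Rightarrow> 'b \<Rightarrow> ereal" where
  "sigma_star U Y f g G gphi gzeta M z =
     (SUP \<theta>\<in>{\<theta>::real. \<exists>\<omega>::nat \<Rightarrow> real. \<forall>u\<in>U. \<forall>y\<in>Y.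
        \<theta> \<le> G u y z + gzeta z \<bullet> g u y z + (\<Sum>i=1..M. \<omega> i *\<^sub>R gphi i y) \<bullet> f u y z}. ereal \<theta>)"

end

theory Submission
  imports Defs
begin

(* The coefficients \<omega> feasible at a fixed level are bounded: otherwise normalising them would
   produce a nonzero \<omega> whose function \<eta> = \<Sum> \<omega>\<^sub>i \<phi>\<^sub>i has
   \<nabla>\<eta> \<bullet> f \<ge> 0 on U \<times> Y.  Along an admissible trajectory \<eta>(y(t)) is absolutely
   continuous with almost everywhere nonnegative derivative, hence nondecreasing (Luzin's
   property (N) stands in for the fundamental theorem of calculus).  Points of Y\<^sup>0 are joined
   by trajectories in both directions, so \<eta> is constant on Y\<^sup>0 and on its closure, and
   \<nabla>\<eta> vanishes on the nonempty open set int cl Y\<^sup>0, contradicting the linear independence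
   of the \<nabla>\<phi>\<^sub>i.  Hence a maximising sequence of coefficients is bounded, and a limit point
   of it attains \<sigma>*. *)

section \<open>Absolutely continuous functions\<close>

lemma abs_cont_onE:
  assumes "abs_cont_on a b y" "e > 0"
  obtains d where "d > 0"
    "\<And>(n::nat) l r. \<forall>k<n. a \<le> l k \<and> l k \<le> r k \<and> r k \<le> b \<Longrightarrow>
        \<forall>k<n. \<forall>j<n. k \<noteq> j \<longrightarrow> r k \<le> l j \<or> r j \<le> l k \<Longrightarrow> (\<Sum>k<n. r k - l k) < d \<Longrightarrow>
        (\<Sum>k<n. norm (y (r k) - y (l k))) < e"
proof -
  obtain d where "d > 0" and H: "\<forall>(n::nat) l r. (\<forall>k<n. a \<le> l k \<and> l k \<le> r k \<and> r k \<le> b) \<and>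
        (\<forall>k<n. \<forall>j<n. k \<noteq> j \<longrightarrow> r k \<le> l j \<or> r j \<le> l k) \<and> (\<Sum>k<n. r k - l k) < d
        \<longrightarrow> (\<Sum>k<n. norm (y (r k) - y (l k))) < e"
    using assms(1)[unfolded abs_cont_on_def, rule_format, OF assms(2)] by blast
  show thesis by (rule that[OF \<open>d > 0\<close>]) (use H in blast)
qed

lemma abs_cont_on_finite_family:
  assumes "abs_cont_on a b y" "e > 0"
  shows "\<exists>d>0. \<forall>(F :: 'i set) l r. finite F \<and> (\<forall>C\<in>F. a \<le> l C \<and> l C \<le> r C \<and> r C \<le> b) \<and>
      (\<forall>C\<in>F. \<forall>C'\<in>F. C \<noteq> C' \<longrightarrow> r C \<le> l C' \<or> r C' \<le> l C) \<and> (\<Sum>C\<in>F. r C - l C) < d \<longrightarrow>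
      (\<Sum>C\<in>F. norm (y (r C) - y (l C))) < e"
proof -
  obtain d where d: "d > 0" and H: "\<And>(n::nat) l r. \<forall>k<n. a \<le> l k \<and> l k \<le> r k \<and> r k \<le> b \<Longrightarrow>
        \<forall>k<n. \<forall>j<n. k \<noteq> j \<longrightarrow> r k \<le> l j \<or> r j \<le> l k \<Longrightarrow> (\<Sum>k<n. r k - l k) < d \<Longrightarrow>
        (\<Sum>k<n. norm (y (r k) - y (l k))) < e"
    using abs_cont_onE[OF assms] by blast
  show ?thesis
  proof (intro exI[of _ d] conjI allI impI d, elim conjE)
    fix F :: "'i set" and l r
    assume F: "finite F" and lr: "\<forall>C\<in>F. a \<le> l C \<and> l C \<le> r C \<and> r C \<le> b"
      and disj: "\<forall>C\<in>F. \<forall>C'\<in>F. C \<noteq> C' \<longrightarrow> r C \<le> l C' \<or> r C' \<le> l C"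
      and len: "(\<Sum>C\<in>F. r C - l C) < d"
    obtain h where h: "bij_betw h {..<card F} F"
      using ex_bij_betw_nat_finite[OF F] by (auto simp: atLeast0LessThan)
    have reindex: "(\<Sum>k<card F. w (h k)) = (\<Sum>C\<in>F. w C)" for w :: "_ \<Rightarrow> real"
      using sum.reindex_bij_betw[OF h] .
    have "(\<Sum>k<card F. norm (y (r (h k)) - y (l (h k)))) < e"
    proof (rule H)
      show "\<forall>k<card F. a \<le> l (h k) \<and> l (h k) \<le> r (h k) \<and> r (h k) \<le> b"
        using lr h by (auto simp: bij_betw_def)
      show "\<forall>k<card F. \<forall>j<card F. k \<noteq> j \<longrightarrow> r (h k) \<le> l (h j) \<or> r (h j) \<le> l (h k)"
      proof (intro allI impI)
        fix k j assume "k < card F" "j < card F" "k \<noteq> j"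
        then have "h k \<in> F" "h j \<in> F" "h k \<noteq> h j" using h by (auto simp: bij_betw_def inj_on_def)
        then show "r (h k) \<le> l (h j) \<or> r (h j) \<le> l (h k)" using disj by blast
      qed
      show "(\<Sum>k<card F. r (h k) - l (h k)) < d"
        using len reindex[of "\<lambda>C. r C - l C"] by simp
    qed
    then show "(\<Sum>C\<in>F. norm (y (r C) - y (l C))) < e"
      using reindex[of "\<lambda>C. norm (y (r C) - y (l C))"] by simp
  qed
qed

lemma abs_cont_on_imp_continuous_on:
  fixes \<phi> :: "real \<Rightarrow> 'a::real_normed_vector"
  assumes "abs_cont_on a b \<phi>"
  shows "continuous_on {a..b} \<phi>"
  unfolding continuous_on_iff
proof (intro ballI allI impI)
  fix x e :: real assume x: "x \<in> {a..b}" and e: "0 < e"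
  obtain d where d: "d > 0" and H: "\<And>(n::nat) l r. \<forall>k<n. a \<le> l k \<and> l k \<le> r k \<and> r k \<le> b \<Longrightarrow>
        \<forall>k<n. \<forall>j<n. k \<noteq> j \<longrightarrow> r k \<le> l j \<or> r j \<le> l k \<Longrightarrow> (\<Sum>k<n. r k - l k) < d \<Longrightarrow>
        (\<Sum>k<n. norm (\<phi> (r k) - \<phi> (l k))) < e"
    using abs_cont_onE[OF assms e] by blast
  show "\<exists>d>0. \<forall>x'\<in>{a..b}. dist x' x < d \<longrightarrow> dist (\<phi> x') (\<phi> x) < e"
  proof (intro exI conjI ballI impI)
    fix x' assume x': "x' \<in> {a..b}" "dist x' x < d"
    have "norm (\<phi> (max x x') - \<phi> (min x x')) < e"
      using H[of 1 "\<lambda>_. min x x'" "\<lambda>_. max x x'"] x x' by (auto simp: dist_real_def)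
    then show "dist (\<phi> x') (\<phi> x) < e"
      by (cases "x \<le> x'") (auto simp: dist_norm norm_minus_commute max_def min_def)
  qed (rule d)
qed

lemma abs_cont_on_add_linear:
  fixes \<phi> :: "real \<Rightarrow> real"
  assumes ac: "abs_cont_on a b \<phi>" and c: "c > 0"
  shows "abs_cont_on a b (\<lambda>t. \<phi> t + c * t)"
  unfolding abs_cont_on_def
proof (intro allI impI)
  fix e :: real assume e: "0 < e"
  obtain d where d: "d > 0" and H: "\<And>(n::nat) l r. \<forall>k<n. a \<le> l k \<and> l k \<le> r k \<and> r k \<le> b \<Longrightarrow>
        \<forall>k<n. \<forall>j<n. k \<noteq> j \<longrightarrow> r k \<le> l j \<or> r j \<le> l k \<Longrightarrow> (\<Sum>k<n. r k - l k) < d \<Longrightarrow>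
        (\<Sum>k<n. norm (\<phi> (r k) - \<phi> (l k))) < e/2"
    using abs_cont_onE[OF ac half_gt_zero[OF e]] by blast
  show "\<exists>d>0. \<forall>(n::nat) l r. (\<forall>k<n. a \<le> l k \<and> l k \<le> r k \<and> r k \<le> b) \<and>
        (\<forall>k<n. \<forall>j<n. k \<noteq> j \<longrightarrow> r k \<le> l j \<or> r j \<le> l k) \<and> (\<Sum>k<n. r k - l k) < d
        \<longrightarrow> (\<Sum>k<n. norm ((\<phi> (r k) + c * r k) - (\<phi> (l k) + c * l k))) < e"
  proof (intro exI[of _ "min d (e/(2*c))"] conjI allI impI)
    show "0 < min d (e/(2*c))" using d e c by simp
    fix n :: nat and l r assume A: "(\<forall>k<n. a \<le> l k \<and> l k \<le> r k \<and> r k \<le> b) \<and>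
        (\<forall>k<n. \<forall>j<n. k \<noteq> j \<longrightarrow> r k \<le> l j \<or> r j \<le> l k) \<and> (\<Sum>k<n. r k - l k) < min d (e/(2*c))"
    have "(\<Sum>k<n. norm ((\<phi> (r k) + c * r k) - (\<phi> (l k) + c * l k)))
        \<le> (\<Sum>k<n. norm (\<phi> (r k) - \<phi> (l k)) + c * (r k - l k))"
    proof (rule sum_mono)
      fix k assume "k \<in> {..<n}"
      then have "0 \<le> c * (r k - l k)" using A c by simp
      moreover have "(\<phi> (r k) + c * r k) - (\<phi> (l k) + c * l k) = (\<phi> (r k) - \<phi> (l k)) + c * (r k - l k)"
        by (simp add: algebra_simps)
      ultimately show "norm ((\<phi> (r k) + c * r k) - (\<phi> (l k) + c * l k))
          \<le> norm (\<phi> (r k) - \<phi> (l k)) + c * (r k - l k)"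
        using abs_triangle_ineq[of "\<phi> (r k) - \<phi> (l k)" "c * (r k - l k)"] by simp
    qed
    also have "\<dots> = (\<Sum>k<n. norm (\<phi> (r k) - \<phi> (l k))) + c * (\<Sum>k<n. r k - l k)"
      by (simp add: sum.distrib sum_distrib_left)
    also have "\<dots> < e/2 + c * (e/(2*c))"
      using A c by (intro add_strict_mono H mult_strict_left_mono) auto
    also have "\<dots> = e" using c by simp
    finally show "(\<Sum>k<n. norm ((\<phi> (r k) + c * r k) - (\<phi> (l k) + c * l k))) < e" .
  qed
qed

lemma abs_cont_on_lipschitz_compose:
  fixes y :: "real \<Rightarrow> 'a::real_normed_vector" and F :: "'a \<Rightarrow> 'b::real_normed_vector"
  assumes y: "abs_cont_on a b y" and F: "B-lipschitz_on K F" and yK: "y ` {a..b} \<subseteq> K"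
  shows "abs_cont_on a b (\<lambda>t. F (y t))"
  unfolding abs_cont_on_def
proof (intro allI impI)
  fix e :: real assume e: "e > 0"
  have B: "B + 1 > 0" using lipschitz_on_nonneg[OF F] by simp
  obtain d where d: "d > 0" and H: "\<And>(n::nat) l r. \<forall>k<n. a \<le> l k \<and> l k \<le> r k \<and> r k \<le> b \<Longrightarrow>
        \<forall>k<n. \<forall>j<n. k \<noteq> j \<longrightarrow> r k \<le> l j \<or> r j \<le> l k \<Longrightarrow> (\<Sum>k<n. r k - l k) < d \<Longrightarrow>
        (\<Sum>k<n. norm (y (r k) - y (l k))) < e / (B + 1)"
    using abs_cont_onE[OF y divide_pos_pos[OF e B]] by blast
  show "\<exists>d>0. \<forall>(n::nat) l r. (\<forall>k<n. a \<le> l k \<and> l k \<le> r k \<and> r k \<le> b) \<and>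
        (\<forall>k<n. \<forall>j<n. k \<noteq> j \<longrightarrow> r k \<le> l j \<or> r j \<le> l k) \<and> (\<Sum>k<n. r k - l k) < d
        \<longrightarrow> (\<Sum>k<n. norm (F (y (r k)) - F (y (l k)))) < e"
  proof (intro exI[of _ d] conjI allI impI d)
    fix n :: nat and l r assume A: "(\<forall>k<n. a \<le> l k \<and> l k \<le> r k \<and> r k \<le> b) \<and>
        (\<forall>k<n. \<forall>j<n. k \<noteq> j \<longrightarrow> r k \<le> l j \<or> r j \<le> l k) \<and> (\<Sum>k<n. r k - l k) < d"
    have "(\<Sum>k<n. norm (F (y (r k)) - F (y (l k)))) \<le> (\<Sum>k<n. (B + 1) * norm (y (r k) - y (l k)))"
    proof (rule sum_mono)
      fix k assume "k \<in> {..<n}"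
      then have "r k \<in> {a..b}" "l k \<in> {a..b}" using A by auto
      then have "y (r k) \<in> K" "y (l k) \<in> K" using yK by auto
      then have "norm (F (y (r k)) - F (y (l k))) \<le> B * norm (y (r k) - y (l k))"
        by (rule lipschitz_on_normD[OF F])
      then show "norm (F (y (r k)) - F (y (l k))) \<le> (B + 1) * norm (y (r k) - y (l k))"
        by (simp add: distrib_right add_increasing2)
    qed
    also have "\<dots> = (B + 1) * (\<Sum>k<n. norm (y (r k) - y (l k)))"
      by (simp add: sum_distrib_left)
    also have "\<dots> < (B + 1) * (e / (B + 1))"
      using A B by (intro mult_strict_left_mono H) auto
    also have "\<dots> = e" using B by simp
    finally show "(\<Sum>k<n. norm (F (y (r k)) - F (y (l k)))) < e" .
  qed
qed

section \<open>Luzin's property (N)\<close>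

lemma open_connected_bounded_real_eq_Ioo:
  fixes C :: "real set"
  assumes "open C" "connected C" "C \<noteq> {}" "bounded C"
  shows "C = {Inf C<..<Sup C}"
proof
  have bdd: "bdd_below C" "bdd_above C"
    using assms(4) by (auto simp: bounded_imp_bdd_below bounded_imp_bdd_above)
  show "C \<subseteq> {Inf C<..<Sup C}"
  proof
    fix x assume "x \<in> C"
    then obtain e where e: "e > 0" "ball x e \<subseteq> C" using assms(1) open_contains_ball by blast
    have "x - e/2 \<in> C" "x + e/2 \<in> C" using e by (auto simp: dist_real_def intro!: subsetD[OF e(2)])
    then have "Inf C \<le> x - e/2" "x + e/2 \<le> Sup C" using bdd by (auto intro: cInf_lower cSup_upper)
    then show "x \<in> {Inf C<..<Sup C}" using e by auto
  qed
  show "{Inf C<..<Sup C} \<subseteq> C"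
  proof
    fix x assume x: "x \<in> {Inf C<..<Sup C}"
    then obtain c1 where "c1 \<in> C" "c1 < x" using cInf_less_iff[OF assms(3) bdd(1)] by auto
    moreover obtain c2 where "c2 \<in> C" "x < c2" using x less_cSup_iff[OF assms(3) bdd(2)] by auto
    moreover have "is_interval C" using assms(2) is_interval_connected_1 by blast
    ultimately show "x \<in> C" unfolding is_interval_1 by (meson less_imp_le)
  qed
qed

lemma component_of_open_subset_Ioo:
  fixes S :: "real set"
  assumes S: "open S" "S \<subseteq> {a<..<b}" and C: "C \<in> components S"
  shows "C = {Inf C<..<Sup C}" and "a \<le> Inf C" and "Inf C < Sup C" and "Sup C \<le> b"
proof -
  have Cab: "C \<subseteq> {a<..<b}" using in_components_subset[OF C] S(2) by blast
  show eq: "C = {Inf C<..<Sup C}"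
    using open_components[OF S(1) C] in_components_connected[OF C] in_components_nonempty[OF C]
      bounded_subset[OF bounded_Ioo Cab]
    by (rule open_connected_bounded_real_eq_Ioo)
  obtain x where "x \<in> C" using in_components_nonempty[OF C] by blast
  then have "x \<in> {Inf C<..<Sup C}" using eq by blast
  then show lt: "Inf C < Sup C" by simp
  from Cab have "{Inf C<..<Sup C} \<subseteq> {a<..<b}" by (simp only: eq[symmetric])
  then show "a \<le> Inf C" "Sup C \<le> b"
    using lt by (simp_all add: greaterThanLessThan_subseteq_greaterThanLessThan)
qed

lemma components_open_subset_Ioo_ordered:
  fixes S :: "real set"
  assumes S: "open S" "S \<subseteq> {a<..<b}" and C: "C \<in> components S" "C' \<in> components S" "C \<noteq> C'"
  shows "Sup C \<le> Inf C' \<or> Sup C' \<le> Inf C"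
proof (rule ccontr)
  assume "\<not> (Sup C \<le> Inf C' \<or> Sup C' \<le> Inf C)"
  then have "(max (Inf C) (Inf C') + min (Sup C) (Sup C')) / 2 \<in> C \<inter> C'"
    using component_of_open_subset_Ioo[OF S C(1)] component_of_open_subset_Ioo[OF S C(2)]
    by (subst (1 2) component_of_open_subset_Ioo(1)[OF S]) (auto simp: C max_def min_def)
  then show False using components_nonoverlap[OF C(1,2)] C(3) by blast
qed

lemma sum_component_lengths_le_measure:
  fixes S :: "real set"
  assumes S: "open S" "S \<subseteq> {a<..<b}" "S \<in> lmeasurable" and F: "F \<subseteq> components S" "finite F"
  shows "(\<Sum>C\<in>F. Sup C - Inf C) \<le> measure lebesgue S"
proof -
  have C: "C = {Inf C<..<Sup C}" "Inf C < Sup C" if "C \<in> F" for C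
    using component_of_open_subset_Ioo[OF S(1,2)] that F(1) by blast+
  have Cm: "measure lebesgue C = Sup C - Inf C" "C \<in> lmeasurable" if "C \<in> F" for C
  proof -
    have "measure lebesgue {Inf C<..<Sup C} = Sup C - Inf C" "{Inf C<..<Sup C} \<in> lmeasurable"
      using C(2)[OF that] by simp_all
    then show "measure lebesgue C = Sup C - Inf C" "C \<in> lmeasurable"
      by (metis C(1)[OF that])+
  qed
  then have "(\<Sum>C\<in>F. Sup C - Inf C) = (\<Sum>C\<in>F. measure lebesgue C)"
    by simp
  also have "\<dots> = measure lebesgue (\<Union>F)"
  proof (rule measure_Union'[symmetric, OF F(2)])
    show "\<And>C. C \<in> F \<Longrightarrow> C \<in> lmeasurable" by (rule Cm(2))
    show "pairwise disjnt F"
      using pairwise_disjoint_components F(1) unfolding pairwise_def disjnt_def by blast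
  qed
  also have "\<dots> \<le> measure lebesgue S"
  proof (rule measure_mono_fmeasurable[OF _ _ S(3)])
    show sub: "\<Union>F \<subseteq> S" using F(1) by (auto dest: in_components_subset)
    have "open (\<Union>F)" using F(1) open_components[OF S(1)] by blast
    then show "\<Union>F \<in> sets lebesgue"
      using sub S(2) by (intro fmeasurableD lmeasurable_open bounded_subset[OF bounded_Ioo]) auto
  qed
  finally show ?thesis .
qed

lemma negligible_imp_small_open_superset:
  fixes N :: "'a::euclidean_space set"
  assumes N: "negligible N" "N \<subseteq> T" and T: "open T" and \<delta>: "\<delta> > 0"
  obtains S where "open S" "N \<subseteq> S" "S \<subseteq> T" "S \<in> lmeasurable" "measure lebesgue S < \<delta>"
proof -
  have Nm: "N \<in> lmeasurable" "measure lebesgue N = 0"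
    using N(1) negligible_imp_measurable negligible_imp_measure0 by auto
  obtain V where V: "open V" "N \<subseteq> V" "V - N \<in> lmeasurable" "emeasure lebesgue (V - N) < ennreal \<delta>"
    using sets_lebesgue_outer_open[OF fmeasurableD[OF Nm(1)] \<delta>] by blast
  have VN: "(V - N) \<union> N = V" using V(2) by blast
  have Vm: "V \<in> lmeasurable" using fmeasurable.Un[OF V(3) Nm(1)] by (simp only: VN)
  have "measure lebesgue (V \<inter> T) \<le> measure lebesgue V"
    by (rule measure_mono_fmeasurable[OF _ _ Vm]) (use V(1) T in auto)
  also have "\<dots> \<le> measure lebesgue (V - N) + measure lebesgue N"
    using measure_Un_le[OF fmeasurableD[OF V(3)] fmeasurableD[OF Nm(1)]] by (simp only: VN)
  also have "\<dots> < \<delta>"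
    using V(4) emeasure_eq_measure2[OF V(3)] \<delta> Nm(2) by (simp add: ennreal_less_iff)
  finally show thesis
    using V(1,2) N(2) T by (intro that[of "V \<inter> T"] fmeasurable_Int_fmeasurable[OF Vm]) auto
qed

lemma continuous_image_Icc_subset_segment:
  fixes \<phi> :: "real \<Rightarrow> real"
  assumes "continuous_on {s..t} \<phi>" "s \<le> t"
  obtains l r where "s \<le> l" "l \<le> r" "r \<le> t" "\<phi> ` {s..t} \<subseteq> closed_segment (\<phi> l) (\<phi> r)"
proof -
  obtain p where p: "p \<in> {s..t}" "\<forall>x\<in>{s..t}. \<phi> p \<le> \<phi> x"
    using continuous_attains_inf[OF compact_Icc _ assms(1)] assms(2) by auto
  obtain q where q: "q \<in> {s..t}" "\<forall>x\<in>{s..t}. \<phi> x \<le> \<phi> q"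
    using continuous_attains_sup[OF compact_Icc _ assms(1)] assms(2) by auto
  have "\<phi> ` {s..t} \<subseteq> closed_segment (\<phi> p) (\<phi> q)"
    using p q by (auto simp: closed_segment_eq_real_ivl)
  moreover have "closed_segment (\<phi> p) (\<phi> q) = closed_segment (\<phi> (min p q)) (\<phi> (max p q))"
    by (cases "p \<le> q") (auto simp: min_def max_def closed_segment_commute)
  ultimately have "\<phi> ` {s..t} \<subseteq> closed_segment (\<phi> (min p q)) (\<phi> (max p q))"
    by simp
  then show thesis using p(1) q(1) by (intro that) auto
qed

lemma components_oscillation_segments:
  fixes \<phi> :: "real \<Rightarrow> real"
  assumes cont: "continuous_on {a..b} \<phi>" and S: "open S" "S \<subseteq> {a<..<b}"
  obtains l r where "\<And>C. C \<in> components S \<Longrightarrow> Inf C \<le> l C \<and> l C \<le> r C \<and> r C \<le> Sup C"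
    and "\<And>C. C \<in> components S \<Longrightarrow> \<phi> ` C \<subseteq> closed_segment (\<phi> (l C)) (\<phi> (r C))"
proof -
  have "\<exists>l r. Inf C \<le> l \<and> l \<le> r \<and> r \<le> Sup C \<and> \<phi> ` C \<subseteq> closed_segment (\<phi> l) (\<phi> r)"
    if C: "C \<in> components S" for C
  proof -
    note C_Ioo = component_of_open_subset_Ioo[OF S C]
    have "C \<subseteq> {Inf C..Sup C}"
    proof
      fix x assume "x \<in> C"
      then have "x \<in> {Inf C<..<Sup C}" using C_Ioo(1) by blast
      then show "x \<in> {Inf C..Sup C}" by simp
    qed
    moreover have "continuous_on {Inf C..Sup C} \<phi>"
      using continuous_on_subset[OF cont] C_Ioo(2,4) by auto
    then obtain l r where "Inf C \<le> l" "l \<le> r" "r \<le> Sup C"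
      "\<phi> ` {Inf C..Sup C} \<subseteq> closed_segment (\<phi> l) (\<phi> r)"
      by (rule continuous_image_Icc_subset_segment[OF _ less_imp_le[OF C_Ioo(3)]]) (rule that)
    ultimately show ?thesis by blast
  qed
  then obtain l r where lr: "\<And>C. C \<in> components S \<Longrightarrow> Inf C \<le> l C \<and> l C \<le> r C \<and> r C \<le> Sup C \<and>
      \<phi> ` C \<subseteq> closed_segment (\<phi> (l C)) (\<phi> (r C))"
    by metis
  show thesis
  proof (rule that)
    show "Inf C \<le> l C \<and> l C \<le> r C \<and> r C \<le> Sup C" if "C \<in> components S" for C
      using lr[OF that] by blast
    show "\<phi> ` C \<subseteq> closed_segment (\<phi> (l C)) (\<phi> (r C))" if "C \<in> components S" for C
      using lr[OF that] by blast
  qed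
qed

lemma abs_cont_on_components_small:
  fixes \<phi> :: "real \<Rightarrow> real"
  assumes ac: "abs_cont_on a b \<phi>" and e: "e > 0"
  shows "\<exists>\<delta>>0. \<forall>S F l r. open S \<and> S \<subseteq> {a<..<b} \<and> S \<in> lmeasurable \<and> measure lebesgue S < \<delta> \<and>
    (\<forall>C\<in>components S. Inf C \<le> l C \<and> l C \<le> r C \<and> r C \<le> Sup C) \<and> F \<subseteq> components S \<and> finite F
    \<longrightarrow> (\<Sum>C\<in>F. \<bar>\<phi> (r C) - \<phi> (l C)\<bar>) < e"
proof -
  obtain \<delta> where \<delta>: "\<delta> > 0" and H: "\<forall>(F :: real set set) l r. finite F \<and>
      (\<forall>C\<in>F. a \<le> l C \<and> l C \<le> r C \<and> r C \<le> b) \<and>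
      (\<forall>C\<in>F. \<forall>C'\<in>F. C \<noteq> C' \<longrightarrow> r C \<le> l C' \<or> r C' \<le> l C) \<and> (\<Sum>C\<in>F. r C - l C) < \<delta> \<longrightarrow>
      (\<Sum>C\<in>F. norm (\<phi> (r C) - \<phi> (l C))) < e"
    using abs_cont_on_finite_family[OF ac e] by blast
  show ?thesis
  proof (intro exI[of _ \<delta>] conjI allI impI \<delta>, elim conjE)
    fix S F l r
    assume S: "open S" "S \<subseteq> {a<..<b}" "S \<in> lmeasurable" "measure lebesgue S < \<delta>"
      and lr: "\<forall>C\<in>components S. Inf C \<le> l C \<and> l C \<le> r C \<and> r C \<le> Sup C"
      and F: "F \<subseteq> components S" "finite F"
    have C: "a \<le> Inf C" "Sup C \<le> b" if "C \<in> F" for C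
      using component_of_open_subset_Ioo[OF S(1,2)] that F(1) by blast+
    have "(\<Sum>C\<in>F. r C - l C) \<le> (\<Sum>C\<in>F. Sup C - Inf C)"
      by (rule sum_mono) (use lr F(1) in force)
    also have "\<dots> \<le> measure lebesgue S"
      by (rule sum_component_lengths_le_measure[OF S(1-3) F])
    finally have len: "(\<Sum>C\<in>F. r C - l C) < \<delta>" using S(4) by linarith
    have disj: "\<forall>C\<in>F. \<forall>C'\<in>F. C \<noteq> C' \<longrightarrow> r C \<le> l C' \<or> r C' \<le> l C"
      using components_open_subset_Ioo_ordered[OF S(1,2)] lr F(1) by (meson order_trans subsetD)
    have "\<forall>C\<in>F. a \<le> l C \<and> l C \<le> r C \<and> r C \<le> b"
      using lr C F(1) by force
    then show "(\<Sum>C\<in>F. \<bar>\<phi> (r C) - \<phi> (l C)\<bar>) < e"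
      using H F(2) disj len by simp
  qed
qed

(* Cover N by an open set of small measure; the images of its component intervals lie in
   segments whose total length is small by absolute continuity. *)
lemma negligible_image_abs_cont:
  fixes \<phi> :: "real \<Rightarrow> real"
  assumes ac: "abs_cont_on a b \<phi>" and N: "negligible N" "N \<subseteq> {a<..<b}"
  shows "negligible (\<phi> ` N)"
  unfolding negligible_outer_le
proof (intro allI impI)
  fix e :: real assume e: "e > 0"
  obtain \<delta> where \<delta>: "\<delta> > 0" and H: "\<forall>S F l r. open S \<and> S \<subseteq> {a<..<b} \<and> S \<in> lmeasurable \<and>
      measure lebesgue S < \<delta> \<and> (\<forall>C\<in>components S. Inf C \<le> l C \<and> l C \<le> r C \<and> r C \<le> Sup C) \<and>
      F \<subseteq> components S \<and> finite F \<longrightarrow> (\<Sum>C\<in>F. \<bar>\<phi> (r C) - \<phi> (l C)\<bar>) < e"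
    using abs_cont_on_components_small[OF ac e] by blast
  obtain S where S: "open S" "N \<subseteq> S" "S \<subseteq> {a<..<b}" "S \<in> lmeasurable" "measure lebesgue S < \<delta>"
    using negligible_imp_small_open_superset[OF N open_greaterThanLessThan \<delta>] by blast
  obtain l r where lr: "\<And>C. C \<in> components S \<Longrightarrow> Inf C \<le> l C \<and> l C \<le> r C \<and> r C \<le> Sup C"
    and img: "\<And>C. C \<in> components S \<Longrightarrow> \<phi> ` C \<subseteq> closed_segment (\<phi> (l C)) (\<phi> (r C))"
    by (rule components_oscillation_segments[OF abs_cont_on_imp_continuous_on[OF ac] S(1,3)]) (rule that)
  define T where "T C = closed_segment (\<phi> (l C)) (\<phi> (r C))" for C
  have T: "T C \<in> lmeasurable" "measure lebesgue (T C) = \<bar>\<phi> (r C) - \<phi> (l C)\<bar>" for C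
    by (auto simp: T_def closed_segment_eq_real_ivl)
  have "\<phi> ` N \<subseteq> \<phi> ` (\<Union>(components S))" using S(2) Union_components[of S] by blast
  also have "\<dots> \<subseteq> (\<Union>C\<in>components S. T C)" using img unfolding T_def by blast
  finally have cover: "\<phi> ` N \<subseteq> (\<Union>C\<in>components S. T C)" .
  have bound: "measure lebesgue (\<Union>C\<in>F. T C) \<le> e" if F: "F \<subseteq> components S" "finite F" for F
  proof -
    have "measure lebesgue (\<Union>C\<in>F. T C) \<le> (\<Sum>C\<in>F. measure lebesgue (T C))"
      using T(1) by (intro measure_UNION_le F(2) fmeasurableD)
    also have "\<dots> = (\<Sum>C\<in>F. \<bar>\<phi> (r C) - \<phi> (l C)\<bar>)" using T(2) by simp
    also have "\<dots> < e"
      by (rule H[rule_format]) (use S(1,3-5) lr F in blast)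
    finally show ?thesis by simp
  qed
  have "countable (components S)"
    by (rule countable_disjoint_open_subsets)
      (use open_components[OF S(1)] pairwise_disjoint_components[of S] in
        \<open>auto simp: pairwise_def disjnt_def\<close>)
  then show "\<exists>T. \<phi> ` N \<subseteq> T \<and> T \<in> lmeasurable \<and> measure lebesgue T \<le> e"
    using cover fmeasurable_UN_bound[OF _ T(1) bound] measure_UN_bound[OF _ T(1) bound] by blast
qed

section \<open>Monotonicity of absolutely continuous functions\<close>

lemma last_crossing:
  fixes \<phi> :: "real \<Rightarrow> real"
  assumes cont: "continuous_on {a..b} \<phi>" and c: "\<phi> b < c" "c \<le> \<phi> a" and ab: "a \<le> b"
  obtains t0 where "t0 \<in> {a..<b}" "\<phi> t0 = c" "\<And>t. t \<in> {t0<..b} \<Longrightarrow> \<phi> t < c"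
proof -
  define T where "T = {t\<in>{a..b}. c \<le> \<phi> t}"
  have "T = {a..b} \<inter> \<phi> -` {c..}" by (auto simp: T_def)
  then have "closed T"
    using continuous_closed_preimage[OF cont closed_atLeastAtMost closed_atLeast] by simp
  moreover have "a \<in> T" "bdd_above T" using c ab by (auto simp: T_def intro: bdd_aboveI[of _ b])
  ultimately have t0: "Sup T \<in> T" using closed_contains_Sup by blast
  have after: "\<phi> t < c" if "t \<in> {Sup T<..b}" for t
  proof (rule ccontr)
    assume "\<not> \<phi> t < c"
    then have "t \<in> T" using that t0 by (auto simp: T_def)
    then show False using cSup_upper[OF _ \<open>bdd_above T\<close>] that by fastforce
  qed
  have ab': "Sup T \<in> {a..<b}" using t0 c(1) by (cases "Sup T = b") (auto simp: T_def)
  have "\<phi> (Sup T) \<le> c"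
  proof (rule ccontr)
    assume "\<not> \<phi> (Sup T) \<le> c"
    moreover have "Sup T \<in> {a..b}" using ab' by simp
    ultimately obtain d where d: "d > 0"
      "\<And>x. x \<in> {a..b} \<Longrightarrow> dist x (Sup T) < d \<Longrightarrow> dist (\<phi> x) (\<phi> (Sup T)) < \<phi> (Sup T) - c"
      using cont[unfolded continuous_on_iff, rule_format, of "Sup T" "\<phi> (Sup T) - c"] by auto
    define s where "s = min b (Sup T + d/2)"
    have "s \<in> {Sup T<..b}" "dist s (Sup T) < d" using ab' d(1) by (auto simp: s_def dist_real_def)
    then show False using d(2)[of s] after[of s] ab' by (auto simp: dist_real_def)
  qed
  then show thesis using that[OF ab' _ after] t0 by (auto simp: T_def)
qed

(* Every value strictly between \<phi> b and \<phi> a is taken at a last crossing point, where the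
   derivative cannot be positive; so these values form the image of a null set. *)
lemma abs_cont_on_le_if_deriv_pos:
  fixes \<phi> :: "real \<Rightarrow> real"
  assumes ac: "abs_cont_on a b \<phi>" and ab: "a \<le> b" and N: "negligible N"
    and der: "\<And>t. t \<in> {a<..<b} - N \<Longrightarrow> \<exists>D>0. (\<phi> has_real_derivative D) (at t)"
  shows "\<phi> a \<le> \<phi> b"
proof (rule ccontr)
  assume "\<not> \<phi> a \<le> \<phi> b"
  have "{\<phi> b<..<\<phi> a} \<subseteq> \<phi> ` (N \<inter> {a<..<b})"
  proof
    fix c assume c: "c \<in> {\<phi> b<..<\<phi> a}"
    then have "\<phi> b < c" "c \<le> \<phi> a" by auto
    then obtain t0 where t0: "t0 \<in> {a..<b}" "\<phi> t0 = c" "\<And>t. t \<in> {t0<..b} \<Longrightarrow> \<phi> t < c"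
      by (rule last_crossing[OF abs_cont_on_imp_continuous_on[OF ac] _ _ ab]) (rule that)
    have "t0 \<noteq> a" using t0(2) c by auto
    moreover have "t0 \<in> N"
    proof (rule ccontr)
      assume "t0 \<notin> N"
      then have "t0 \<in> {a<..<b} - N" using t0(1) \<open>t0 \<noteq> a\<close> by auto
      then obtain D where "D > 0" "(\<phi> has_real_derivative D) (at t0)" using der by blast
      then obtain d where d: "d > 0" "\<forall>h>0. h < d \<longrightarrow> \<phi> t0 < \<phi> (t0 + h)"
        using DERIV_pos_inc_right by blast
      define h where "h = min (d/2) (b - t0)"
      have "h > 0" "h < d" "t0 + h \<in> {t0<..b}" using d(1) t0(1) by (auto simp: h_def)
      then show False using d(2) t0(2,3) by force
    qed
    ultimately show "c \<in> \<phi> ` (N \<inter> {a<..<b})" using t0 by force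
  qed
  moreover have "negligible (\<phi> ` (N \<inter> {a<..<b}))"
    by (rule negligible_image_abs_cont[OF ac]) (auto intro: negligible_subset[OF N])
  ultimately have "negligible {\<phi> b<..<\<phi> a}" using negligible_subset by blast
  then have "measure lebesgue {\<phi> b<..<\<phi> a} = 0" by (rule negligible_imp_measure0)
  then show False using \<open>\<not> \<phi> a \<le> \<phi> b\<close> by simp
qed

lemma abs_cont_on_le_if_deriv_nonneg:
  fixes \<phi> :: "real \<Rightarrow> real"
  assumes ac: "abs_cont_on a b \<phi>" and ab: "a \<le> b" and N: "negligible N"
    and der: "\<And>t. t \<in> {a<..<b} - N \<Longrightarrow> \<exists>D\<ge>0. (\<phi> has_real_derivative D) (at t)"
  shows "\<phi> a \<le> \<phi> b"
proof -
  have perturbed: "\<phi> a + \<epsilon> * a \<le> \<phi> b + \<epsilon> * b" if \<epsilon>: "\<epsilon> > 0" for \<epsilon>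
  proof (rule abs_cont_on_le_if_deriv_pos[OF abs_cont_on_add_linear[OF ac \<epsilon>] ab N])
    fix t assume "t \<in> {a<..<b} - N"
    then obtain D where "D \<ge> 0" "(\<phi> has_real_derivative D) (at t)" using der by blast
    then have "((\<lambda>t. \<phi> t + \<epsilon> * t) has_real_derivative D + \<epsilon>) (at t)" "D + \<epsilon> > 0"
      using \<epsilon> by (auto intro!: derivative_eq_intros)
    then show "\<exists>D>0. ((\<lambda>t. \<phi> t + \<epsilon> * t) has_real_derivative D) (at t)" by blast
  qed
  show ?thesis
  proof (rule ccontr)
    assume "\<not> \<phi> a \<le> \<phi> b"
    define \<epsilon> where "\<epsilon> = (\<phi> a - \<phi> b) / (2 * (b - a + 1))"
    have \<epsilon>: "\<epsilon> > 0" using \<open>\<not> \<phi> a \<le> \<phi> b\<close> ab by (simp add: \<epsilon>_def)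
    have "\<epsilon> * (b - a) < \<epsilon> * (2 * (b - a + 1))" using \<epsilon> ab by (intro mult_strict_left_mono) auto
    also have "\<dots> = \<phi> a - \<phi> b" using ab by (simp add: \<epsilon>_def)
    finally show False using perturbed[OF \<epsilon>] by (simp add: algebra_simps)
  qed
qed

section \<open>Lie derivatives along admissible trajectories\<close>

lemma lipschitz_on_cball_if_continuous_gradient:
  fixes e :: "'a::euclidean_space \<Rightarrow> real"
  assumes e_der: "\<And>x. (e has_derivative (\<lambda>h. ge x \<bullet> h)) (at x)" and ge_cont: "continuous_on UNIV ge"
  obtains B where "B-lipschitz_on (cball x0 R) e"
proof -
  have "bounded (ge ` cball x0 R)"
    by (intro compact_imp_bounded compact_continuous_image continuous_on_subset[OF ge_cont]) auto
  then obtain B where B: "B > 0" "\<And>x. x \<in> cball x0 R \<Longrightarrow> norm (ge x) \<le> B"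
    unfolding bounded_pos by blast
  have "B-lipschitz_on (cball x0 R) e"
  proof (rule lipschitz_onI)
    fix x x' assume "x \<in> cball x0 R" "x' \<in> cball x0 R"
    then have "norm (e x - e x') \<le> B * norm (x - x')"
    proof (rule differentiable_bound[OF convex_cball, rotated 2])
      show "(e has_derivative (\<lambda>h. ge w \<bullet> h)) (at w within cball x0 R)" for w
        by (rule has_derivative_at_withinI[OF e_der])
      show "onorm (\<lambda>h. ge w \<bullet> h) \<le> B" if "w \<in> cball x0 R" for w
      proof (rule onorm_le)
        fix h
        have "norm (ge w \<bullet> h) \<le> norm (ge w) * norm h" using Cauchy_Schwarz_ineq2 by simp
        also have "\<dots> \<le> B * norm h" using B(2)[OF that] by (simp add: mult_right_mono)
        finally show "norm (ge w \<bullet> h) \<le> B * norm h" .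
      qed
    qed
    then show "dist (e x) (e x') \<le> B * dist x x'" by (simp add: dist_norm)
  qed (use B in simp)
  then show thesis by (rule that)
qed

lemma admissible_pair_nondecreasing:
  fixes e :: "'a::euclidean_space \<Rightarrow> real" and f :: "'u::topological_space \<Rightarrow> 'a \<Rightarrow> 'b \<Rightarrow> 'a"
  assumes e_der: "\<And>x. (e has_derivative (\<lambda>h. ge x \<bullet> h)) (at x)" and ge_cont: "continuous_on UNIV ge"
    and Y: "bounded Y" and adm: "admissible_pair U Y f z S u y" and S: "S \<ge> 0"
    and nonneg: "\<And>v w. v \<in> U \<Longrightarrow> w \<in> Y \<Longrightarrow> 0 \<le> ge w \<bullet> f v w z"
  shows "e (y 0) \<le> e (y S)"
proof -
  have acy: "abs_cont_on 0 S y"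
    and ae: "AE t in lebesgue. t \<in> {0..S} \<longrightarrow> (y has_vector_derivative f (u t) (y t) z) (at t)"
    and UY: "\<And>t. t \<in> {0..S} \<Longrightarrow> u t \<in> U \<and> y t \<in> Y"
    using adm unfolding admissible_pair_def by auto
  obtain x0 R where R: "Y \<subseteq> cball x0 R" using Y bounded_subset_cball by blast
  obtain B where "B-lipschitz_on (cball x0 R) e"
    using lipschitz_on_cball_if_continuous_gradient[OF e_der ge_cont] by blast
  then have ac: "abs_cont_on 0 S (\<lambda>t. e (y t))"
    by (rule abs_cont_on_lipschitz_compose[OF acy]) (use UY R in auto)
  from ae obtain N where N: "{t \<in> space lebesgue. \<not> (t \<in> {0..S} \<longrightarrow>
      (y has_vector_derivative f (u t) (y t) z) (at t))} \<subseteq> N"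
      "emeasure lebesgue N = 0" "N \<in> sets lebesgue"
    by (rule AE_E)
  show ?thesis
  proof (rule abs_cont_on_le_if_deriv_nonneg[OF ac S])
    show "negligible N" using null_setsI[OF N(2,3)] negligible_iff_null_sets by blast
    fix t assume t: "t \<in> {0<..<S} - N"
    then have "t \<notin> {t \<in> space lebesgue. \<not> (t \<in> {0..S} \<longrightarrow>
        (y has_vector_derivative f (u t) (y t) z) (at t))}" using N(1) by blast
    then have "(y has_vector_derivative f (u t) (y t) z) (at t)" using t by simp
    then have "((e \<circ> y) has_derivative (\<lambda>h. ge (y t) \<bullet> h) \<circ> (\<lambda>h. h *\<^sub>R f (u t) (y t) z)) (at t)"
      unfolding has_vector_derivative_def by (rule diff_chain_at[OF _ e_der])
    moreover have "(\<lambda>h. ge (y t) \<bullet> h) \<circ> (\<lambda>h. h *\<^sub>R f (u t) (y t) z) = (*) (ge (y t) \<bullet> f (u t) (y t) z)"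
      by (auto simp: fun_eq_iff)
    ultimately have "((\<lambda>t. e (y t)) has_real_derivative ge (y t) \<bullet> f (u t) (y t) z) (at t)"
      unfolding has_field_derivative_def by (simp add: o_def)
    moreover have "0 \<le> ge (y t) \<bullet> f (u t) (y t) z" using nonneg UY t by simp
    ultimately show "\<exists>D\<ge>0. ((\<lambda>t. e (y t)) has_real_derivative D) (at t)" by blast
  qed
qed

lemma gradient_zero_if_constant_on:
  fixes e :: "'a::euclidean_space \<Rightarrow> real"
  assumes e_der: "\<And>x. (e has_derivative (\<lambda>h. ge x \<bullet> h)) (at x)"
    and const: "\<And>x x'. x \<in> A \<Longrightarrow> x' \<in> A \<Longrightarrow> e x = e x'"
    and x: "x \<in> interior (closure A)"
  shows "ge x = 0"
proof -
  have "A \<noteq> {}" using x by auto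
  then obtain a where a: "a \<in> A" by blast
  have "continuous_on UNIV e"
    by (intro continuous_at_imp_continuous_on ballI has_derivative_continuous[OF e_der])
  then have "closed {w. e w = e a}" using continuous_closed_preimage_constant[of UNIV e] by simp
  moreover have "A \<subseteq> {w. e w = e a}" using const[OF _ a] by blast
  ultimately have "closure A \<subseteq> {w. e w = e a}" by (simp add: closure_minimal)
  then have eqa: "e w = e a" if "w \<in> interior (closure A)" for w using that interior_subset by blast
  have "(e has_derivative (\<lambda>h. 0)) (at x)"
    by (rule has_derivative_transform_within_open[OF has_derivative_const open_interior x]) (simp add: eqa)
  then have "(\<lambda>h. ge x \<bullet> h) = (\<lambda>h. 0)" by (rule has_derivative_unique[OF e_der])
  from fun_cong[OF this, of "ge x"] show ?thesis by simp
qed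

lemma coeffs_zero_if_lie_derivative_nonneg:
  fixes f :: "'u::topological_space \<Rightarrow> 'a::euclidean_space \<Rightarrow> 'b \<Rightarrow> 'a"
    and phi :: "nat \<Rightarrow> 'a \<Rightarrow> real" and gphi :: "nat \<Rightarrow> 'a \<Rightarrow> 'a" and c :: "nat \<Rightarrow> real"
  assumes Y: "bounded Y"
    and phi_deriv: "\<And>i y. (phi i has_derivative (\<lambda>v. gphi i y \<bullet> v)) (at y)"
    and gphi_cont: "\<And>i. continuous_on UNIV (gphi i)"
    and lin_indep: "\<And>W w. open W \<Longrightarrow> W \<noteq> {} \<Longrightarrow>
      \<forall>y\<in>W. (\<Sum>i=1..M. w i *\<^sub>R gphi i y) = 0 \<Longrightarrow> \<forall>i\<in>{1..M}. w i = 0"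
    and Y0: "interior (closure Y0) \<noteq> {}"
    and ctrl: "\<forall>y'\<in>Y0. \<forall>y''\<in>Y0. \<exists>S>0. \<exists>u y. admissible_pair U Y f z S u y \<and> y 0 = y' \<and> y S = y''"
    and nonneg: "\<And>v w. v \<in> U \<Longrightarrow> w \<in> Y \<Longrightarrow> 0 \<le> (\<Sum>i=1..M. c i *\<^sub>R gphi i w) \<bullet> f v w z"
  shows "\<forall>i\<in>{1..M}. c i = 0"
proof -
  define eta where "eta x = (\<Sum>i=1..M. c i * phi i x)" for x
  define geta where "geta x = (\<Sum>i=1..M. c i *\<^sub>R gphi i x)" for x
  have eta_der: "(eta has_derivative (\<lambda>h. geta x \<bullet> h)) (at x)" for x
  proof -
    have "(eta has_derivative (\<lambda>h. \<Sum>i=1..M. c i * (gphi i x \<bullet> h))) (at x)"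
      unfolding eta_def[abs_def] by (intro has_derivative_sum has_derivative_mult_right phi_deriv)
    moreover have "(\<lambda>h. \<Sum>i=1..M. c i * (gphi i x \<bullet> h)) = (\<lambda>h. geta x \<bullet> h)"
      by (simp add: fun_eq_iff geta_def inner_sum_left)
    ultimately show ?thesis by simp
  qed
  have geta_cont: "continuous_on UNIV geta"
    unfolding geta_def[abs_def] by (intro continuous_on_sum continuous_on_scaleR continuous_on_const gphi_cont)
  have le: "eta y' \<le> eta y''" if ends: "y' \<in> Y0" "y'' \<in> Y0" for y' y''
  proof -
    obtain S u y where S: "S > 0" "admissible_pair U Y f z S u y" "y 0 = y'" "y S = y''"
      using ctrl ends by blast
    have "eta (y 0) \<le> eta (y S)"
      by (rule admissible_pair_nondecreasing[OF eta_der geta_cont Y S(2)])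
        (use nonneg S(1) in \<open>auto simp: geta_def\<close>)
    then show ?thesis using S by simp
  qed
  have const: "eta y' = eta y''" if "y' \<in> Y0" "y'' \<in> Y0" for y' y''
    using le[OF that] le[OF that(2,1)] by (rule antisym)
  have "\<forall>x\<in>interior (closure Y0). geta x = 0"
    using gradient_zero_if_constant_on[OF eta_der const] by blast
  then show ?thesis
    by (intro lin_indep[of "interior (closure Y0)"] open_interior Y0) (simp add: geta_def)
qed

section \<open>Attainment of the dual supremum\<close>

lemma bounded_coords_convergent_subseq:
  fixes X :: "nat \<Rightarrow> nat \<Rightarrow> real"
  assumes "\<And>k i. i \<in> {1..M} \<Longrightarrow> \<bar>X k i\<bar> \<le> C"
  shows "\<exists>r L. strict_mono r \<and> (\<forall>i\<in>{1..M}. (\<lambda>k. X (r k) i) \<longlonglongrightarrow> L i)"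
  using assms
proof (induction M)
  case 0
  show ?case by (intro exI[of _ id]) (auto simp: strict_mono_def)
next
  case (Suc M)
  then obtain r L where r: "strict_mono r" "\<forall>i\<in>{1..M}. (\<lambda>k. X (r k) i) \<longlonglongrightarrow> L i" by force
  have "bounded (range (\<lambda>k. X (r k) (Suc M)))"
    using Suc.prems[of "Suc M"] by (auto simp: bounded_iff)
  then obtain l r2 where r2: "strict_mono r2" "((\<lambda>k. X (r k) (Suc M)) \<circ> r2) \<longlonglongrightarrow> l"
    using bounded_imp_convergent_subsequence by blast
  have "(\<lambda>k. X ((r \<circ> r2) k) i) \<longlonglongrightarrow> (L(Suc M := l)) i" if "i \<in> {1..Suc M}" for i
  proof (cases "i = Suc M")
    case True then show ?thesis using r2(2) by (simp add: o_def)
  next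
    case False
    then have "i \<in> {1..M}" using that by auto
    then have "((\<lambda>k. X (r k) i) \<circ> r2) \<longlonglongrightarrow> L i"
      using r(2) LIMSEQ_subseq_LIMSEQ r2(1) by blast
    then show ?thesis using False by (simp add: o_def)
  qed
  then show ?case using strict_mono_o[OF r(1) r2(1)] by blast
qed

lemma recession_direction_nonneg:
  fixes w :: "nat \<Rightarrow> nat \<Rightarrow> real"
  assumes feasible: "\<And>k. \<forall>x\<in>X. \<theta> \<le> a x + (\<Sum>i=1..M. w k i * b i x)"
    and n: "\<And>k. n k > 0" "filterlim n at_top sequentially"
    and conv: "\<forall>i\<in>{1..M}. (\<lambda>k. w k i / n k) \<longlonglongrightarrow> L i"
  shows "\<forall>x\<in>X. 0 \<le> (\<Sum>i=1..M. L i * b i x)"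
proof
  fix x assume x: "x \<in> X"
  show "0 \<le> (\<Sum>i=1..M. L i * b i x)"
  proof (rule tendsto_le[OF trivial_limit_sequentially])
    show "(\<lambda>k. \<Sum>i=1..M. w k i / n k * b i x) \<longlonglongrightarrow> (\<Sum>i=1..M. L i * b i x)"
      by (intro tendsto_sum tendsto_mult_right) (use conv in blast)
    show "(\<lambda>k. (\<theta> - a x) / n k) \<longlonglongrightarrow> 0"
      by (intro tendsto_divide_0[OF tendsto_const] filterlim_at_top_imp_at_infinity n(2))
    have "(\<theta> - a x) / n k \<le> (\<Sum>i=1..M. w k i / n k * b i x)" for k
    proof -
      have "\<theta> - a x \<le> (\<Sum>i=1..M. w k i * b i x)" using feasible[of k] x by auto
      then have "(\<theta> - a x) / n k \<le> (\<Sum>i=1..M. w k i * b i x) / n k"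
        using n(1)[of k] by (simp add: divide_right_mono)
      also have "\<dots> = (\<Sum>i=1..M. w k i / n k * b i x)"
        by (simp add: sum_divide_distrib)
      finally show ?thesis .
    qed
    then show "\<forall>\<^sub>F k in sequentially. (\<theta> - a x) / n k \<le> (\<Sum>i=1..M. w k i / n k * b i x)"
      by simp
  qed
qed

lemma incseq_approaching_Sup:
  fixes \<Theta> :: "real set"
  assumes "\<Theta> \<noteq> {}"
  obtains t where "incseq t" "range t \<subseteq> \<Theta>" "(SUP \<theta>\<in>\<Theta>. ereal \<theta>) = (SUP k. ereal (t k))"
proof -
  obtain s where s: "incseq s" "range s \<subseteq> ereal ` \<Theta>" "Sup (ereal ` \<Theta>) = (SUP k. s k)"
    using Sup_countable_SUP[of "ereal ` \<Theta>"] assms by blast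
  then have "\<forall>k. \<exists>t\<in>\<Theta>. s k = ereal t" by blast
  then obtain t where t: "\<And>k. t k \<in> \<Theta>" "\<And>k. s k = ereal (t k)" by metis
  show thesis
  proof (rule that)
    show "incseq t" using s(1) by (simp add: incseq_def t(2))
    show "range t \<subseteq> \<Theta>" using t(1) by blast
    show "(SUP \<theta>\<in>\<Theta>. ereal \<theta>) = (SUP k. ereal (t k))" using s(3) by (simp add: t(2))
  qed
qed

(* The dual problem as a semi-infinite linear program: maximise \<theta> subject to
   \<theta> \<le> a x + \<Sum>\<^sub>i \<omega>\<^sub>i b\<^sub>i x for all x \<in> X. *)
context
  fixes X :: "'x set" and a :: "'x \<Rightarrow> real" and b :: "nat \<Rightarrow> 'x \<Rightarrow> real" and M :: nat
  assumes nondegenerate: "\<And>v. \<forall>x\<in>X. 0 \<le> (\<Sum>i=1..M. v i * b i x) \<Longrightarrow> \<forall>i\<in>{1..M}. v i = 0"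
begin

(* Otherwise normalised feasible coefficients accumulate at a nonzero recession direction. *)
lemma feasible_coeffs_bounded:
  "\<exists>B. \<forall>\<omega>. (\<forall>x\<in>X. \<theta> \<le> a x + (\<Sum>i=1..M. \<omega> i * b i x)) \<longrightarrow> (\<Sum>i=1..M. \<bar>\<omega> i\<bar>) \<le> B"
proof (rule ccontr)
  assume "\<nexists>B. \<forall>\<omega>. (\<forall>x\<in>X. \<theta> \<le> a x + (\<Sum>i=1..M. \<omega> i * b i x)) \<longrightarrow> (\<Sum>i=1..M. \<bar>\<omega> i\<bar>) \<le> B"
  then have "\<forall>k::nat. \<exists>\<omega>. (\<forall>x\<in>X. \<theta> \<le> a x + (\<Sum>i=1..M. \<omega> i * b i x)) \<and> real k < (\<Sum>i=1..M. \<bar>\<omega> i\<bar>)"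
    by (meson not_le)
  then obtain w where w: "\<And>k. \<forall>x\<in>X. \<theta> \<le> a x + (\<Sum>i=1..M. w k i * b i x)"
    and big: "\<And>k. real k < (\<Sum>i=1..M. \<bar>w k i\<bar>)"
    by metis
  define n where "n k = (\<Sum>i=1..M. \<bar>w k i\<bar>)" for k
  have n: "n k > 0" for k using big[of k] unfolding n_def by linarith
  have "\<bar>w k i / n k\<bar> \<le> 1" if "i \<in> {1..M}" for k i
    using member_le_sum[OF that, of "\<lambda>i. \<bar>w k i\<bar>"] n[of k]
    by (simp add: n_def abs_divide divide_le_eq_1)
  then have "\<exists>r L. strict_mono r \<and> (\<forall>i\<in>{1..M}. (\<lambda>k. w (r k) i / n (r k)) \<longlonglongrightarrow> L i)"
    by (rule bounded_coords_convergent_subseq)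
  then obtain r L where r: "strict_mono r" "\<forall>i\<in>{1..M}. (\<lambda>k. w (r k) i / n (r k)) \<longlonglongrightarrow> L i"
    by blast
  have "(\<Sum>i=1..M. \<bar>w k i / n k\<bar>) = 1" for k
  proof -
    have "(\<Sum>i=1..M. \<bar>w k i / n k\<bar>) = (\<Sum>i=1..M. \<bar>w k i\<bar> / n k)"
      using n[of k] by (simp add: abs_divide)
    also have "\<dots> = n k / n k" unfolding n_def by (rule sum_divide_distrib[symmetric])
    finally show ?thesis using n[of k] by simp
  qed
  moreover have "(\<lambda>k. \<Sum>i=1..M. \<bar>w (r k) i / n (r k)\<bar>) \<longlonglongrightarrow> (\<Sum>i=1..M. \<bar>L i\<bar>)"
    by (intro tendsto_sum tendsto_rabs) (use r(2) in blast)
  ultimately have "(\<lambda>k. 1) \<longlonglongrightarrow> (\<Sum>i=1..M. \<bar>L i\<bar>)" by simp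
  then have L1: "(\<Sum>i=1..M. \<bar>L i\<bar>) = 1" by (simp add: LIMSEQ_const_iff)
  have "real k \<le> n (r k)" for k
    using seq_suble[OF r(1), of k] big[of "r k"] unfolding n_def by linarith
  then have "filterlim (\<lambda>k. n (r k)) at_top sequentially"
    by (intro filterlim_at_top_mono[OF filterlim_real_sequentially always_eventually]) simp
  with w n r(2) have "\<forall>x\<in>X. 0 \<le> (\<Sum>i=1..M. L i * b i x)"
    by (intro recession_direction_nonneg[where w = "\<lambda>k. w (r k)" and n = "\<lambda>k. n (r k)"])
  then have "\<forall>i\<in>{1..M}. L i = 0" by (rule nondegenerate)
  then show False using L1 by simp
qed

lemma Sup_feasible_attained:
  "\<exists>\<omega>. \<forall>x\<in>X. (SUP \<theta>\<in>{\<theta>. \<exists>\<omega>. \<forall>x\<in>X. \<theta> \<le> a x + (\<Sum>i=1..M. \<omega> i * b i x)}. ereal \<theta>)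
      \<le> ereal (a x + (\<Sum>i=1..M. \<omega> i * b i x))"
proof -
  define \<Theta> where "\<Theta> = {\<theta>. \<exists>\<omega>. \<forall>x\<in>X. \<theta> \<le> a x + (\<Sum>i=1..M. \<omega> i * b i x)}"
  have "\<exists>\<omega>. \<forall>x\<in>X. (SUP \<theta>\<in>\<Theta>. ereal \<theta>) \<le> ereal (a x + (\<Sum>i=1..M. \<omega> i * b i x))"
  proof (cases "\<Theta> = {}")
    case True
    then show ?thesis by simp
  next
    case False
    then obtain t where t: "incseq t" "range t \<subseteq> \<Theta>" "(SUP \<theta>\<in>\<Theta>. ereal \<theta>) = (SUP k. ereal (t k))"
      by (rule incseq_approaching_Sup)
    then have "\<forall>k. \<exists>\<omega>. \<forall>x\<in>X. t k \<le> a x + (\<Sum>i=1..M. \<omega> i * b i x)" unfolding \<Theta>_def by blast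
    then obtain \<omega> where feasible: "\<And>k. \<forall>x\<in>X. t k \<le> a x + (\<Sum>i=1..M. \<omega> k i * b i x)" by metis
    obtain B where B: "\<forall>\<omega>. (\<forall>x\<in>X. t 0 \<le> a x + (\<Sum>i=1..M. \<omega> i * b i x)) \<longrightarrow>
        (\<Sum>i=1..M. \<bar>\<omega> i\<bar>) \<le> B"
      using feasible_coeffs_bounded[of "t 0"] by blast
    have "\<bar>\<omega> k i\<bar> \<le> B" if "i \<in> {1..M}" for k i
    proof -
      have "\<forall>x\<in>X. t 0 \<le> a x + (\<Sum>i=1..M. \<omega> k i * b i x)"
        using feasible[of k] order_trans[OF incseqD[OF t(1), of 0 k]] by blast
      then have "(\<Sum>i=1..M. \<bar>\<omega> k i\<bar>) \<le> B" using B by blast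
      then show ?thesis using member_le_sum[OF that, of "\<lambda>i. \<bar>\<omega> k i\<bar>"] by simp
    qed
    then have "\<exists>r L. strict_mono r \<and> (\<forall>i\<in>{1..M}. (\<lambda>k. \<omega> (r k) i) \<longlonglongrightarrow> L i)"
      by (rule bounded_coords_convergent_subseq)
    then obtain r L where r: "strict_mono r" "\<forall>i\<in>{1..M}. (\<lambda>k. \<omega> (r k) i) \<longlonglongrightarrow> L i"
      by blast
    have "t j \<le> a x + (\<Sum>i=1..M. L i * b i x)" if x: "x \<in> X" for x j
    proof (rule tendsto_lowerbound[OF _ _ trivial_limit_sequentially])
      show "(\<lambda>k. a x + (\<Sum>i=1..M. \<omega> (r k) i * b i x)) \<longlonglongrightarrow> a x + (\<Sum>i=1..M. L i * b i x)"
        by (intro tendsto_intros) (use r(2) in blast)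
      show "\<forall>\<^sub>F k in sequentially. t j \<le> a x + (\<Sum>i=1..M. \<omega> (r k) i * b i x)"
      proof (rule eventually_sequentiallyI[of j])
        fix k assume "j \<le> k"
        then have "t j \<le> t (r k)" using seq_suble[OF r(1), of k] by (intro incseqD[OF t(1)]) simp
        then show "t j \<le> a x + (\<Sum>i=1..M. \<omega> (r k) i * b i x)"
          using feasible[of "r k"] x by (blast intro: order_trans)
      qed
    qed
    then show ?thesis using t(3) by (intro exI[of _ L]) (simp add: SUP_le_iff)
  qed
  then show ?thesis by (simp only: \<Theta>_def)
qed

end

theorem proposition8p4:
  fixes U :: "'u::metric_space set"
    and Y :: "'a::euclidean_space set" and Z :: "'b::euclidean_space set"
    and f :: "'u \<Rightarrow> 'a \<Rightarrow> 'b \<Rightarrow> 'a" and g :: "'u \<Rightarrow> 'a \<Rightarrow> 'b \<Rightarrow> 'b"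
    and G :: "'u \<Rightarrow> 'a \<Rightarrow> 'b \<Rightarrow> real"
    and phi :: "nat \<Rightarrow> 'a \<Rightarrow> real" and gphi :: "nat \<Rightarrow> 'a \<Rightarrow> 'a"
    and zeta :: "'b \<Rightarrow> real" and gzeta :: "'b \<Rightarrow> 'b"
    and M :: nat and z :: 'b and Y0 :: "'a set"
  assumes U: "compact U"
    and Y: "compact Y" and Z: "compact Z"
    and f_cont: "continuous_on (U \<times> UNIV \<times> UNIV) (\<lambda>(u, y, z). f u y z)"
    and g_cont: "continuous_on (U \<times> UNIV \<times> UNIV) (\<lambda>(u, y, z). g u y z)"
    and f_lip: "\<exists>L. \<forall>u\<in>U. \<forall>y1 y2 z1 z2.
                  dist (f u y1 z1) (f u y2 z2) \<le> L * dist (y1, z1) (y2, z2)"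
    and g_lip: "\<exists>L. \<forall>u\<in>U. \<forall>y1 y2 z1 z2.
                  dist (g u y1 z1) (g u y2 z2) \<le> L * dist (y1, z1) (y2, z2)"
    and G_cont: "continuous_on (U \<times> UNIV \<times> UNIV) (\<lambda>(u, y, z). G u y z)"
    and phi_deriv: "\<And>i y. (phi i has_derivative (\<lambda>v. gphi i y \<bullet> v)) (at y)"
    and gphi_cont: "\<And>i. continuous_on UNIV (gphi i)"
    and lin_indep: "\<And>(K::nat) (W::'a set) (w::nat \<Rightarrow> real).
                      open W \<Longrightarrow> W \<noteq> {} \<Longrightarrow>
                      (\<forall>y\<in>W. (\<Sum>i=1..K. w i *\<^sub>R gphi i y) = 0) \<Longrightarrow>
                      \<forall>i\<in>{1..K}. w i = 0"
    and zeta_deriv: "\<And>x. (zeta has_derivative (\<lambda>v. gzeta x \<bullet> v)) (at x)"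
    and gzeta_cont: "continuous_on UNIV gzeta"
    and z: "z \<in> Z"
    and Y0: "Y0 \<subseteq> Y" "interior (closure Y0) \<noteq> {}"
    and ctrl: "\<forall>y' \<in> Y0. \<forall>y'' \<in> Y0. \<exists>S>0. \<exists>u y.
                 admissible_pair U Y f z S u y \<and> y 0 = y' \<and> y S = y''"
  shows "\<exists>\<omega>::nat \<Rightarrow> real. \<forall>u\<in>U. \<forall>y\<in>Y.
           sigma_star U Y f g G gphi gzeta M z
             \<le> ereal (G u y z + gzeta z \<bullet> g u y z + (\<Sum>i=1..M. \<omega> i *\<^sub>R gphi i y) \<bullet> f u y z)"
proof -
  define a where "a = (\<lambda>(v, w). G v w z + gzeta z \<bullet> g v w z)"
  define b where "b i = (\<lambda>(v, w). gphi i w \<bullet> f v w z)" for i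
  have lie: "(\<Sum>i=1..M. \<omega> i *\<^sub>R gphi i w) \<bullet> f v w z = (\<Sum>i=1..M. \<omega> i * b i (v, w))"
    for \<omega> :: "nat \<Rightarrow> real" and v w
    by (simp add: b_def inner_sum_left)
  have nondegenerate: "\<forall>i\<in>{1..M}. c i = 0" if "\<forall>x\<in>U \<times> Y. 0 \<le> (\<Sum>i=1..M. c i * b i x)" for c
  proof (rule coeffs_zero_if_lie_derivative_nonneg[OF compact_imp_bounded[OF Y] phi_deriv gphi_cont
        lin_indep Y0(2) ctrl])
    fix v w assume "v \<in> U" "w \<in> Y"
    then show "0 \<le> (\<Sum>i=1..M. c i *\<^sub>R gphi i w) \<bullet> f v w z" unfolding lie using that by blast
  qed
  have "sigma_star U Y f g G gphi gzeta M z
      = (SUP \<theta>\<in>{\<theta>. \<exists>\<omega>. \<forall>x\<in>U \<times> Y. \<theta> \<le> a x + (\<Sum>i=1..M. \<omega> i * b i x)}. ereal \<theta>)"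
    unfolding sigma_star_def lie by (simp add: a_def)
  moreover obtain \<omega> where "\<forall>x\<in>U \<times> Y. (SUP \<theta>\<in>{\<theta>. \<exists>\<omega>. \<forall>x\<in>U \<times> Y. \<theta> \<le> a x + (\<Sum>i=1..M. \<omega> i * b i x)}.
      ereal \<theta>) \<le> ereal (a x + (\<Sum>i=1..M. \<omega> i * b i x))"
    using Sup_feasible_attained[OF nondegenerate] by blast
  ultimately show ?thesis unfolding lie by (auto simp: a_def)
qed

end
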